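(* Let $K$ be an algebraically closed field of characteristic zero, $\mathcal{K}=K(t)$, $\alpha \in \mathcal{K}$, and $M \ge 0$. Then $\alpha$ realizes portrait $(M,3)$ for $f_2(z) = z^2+t$ if and only if $(\alpha,M) \ne (0,1)$.
   Context: For $c \in K$, let $f_{2,c}(z) = z^2+c$. A point $x$ has preperiodic portrait $(M,N)$ for $\phi$ if $M\ge0$ is minimal with $\phi^M(x)$ periodic and $\phi^M(x)$ has exact period $N$. We say $\alpha\in\mathcal{K}$ realizes portrait $(M,N)$ for $f_2$ if there exists $c \in K$ such that $\alpha(c)\in\mathbb{P}^1(K)$ (reduction modulo the place $t=c$) has portrait $(M,N)$ for $f_{2,c}$. *)

theory Defs
  imports "HOL-Computational_Algebra.Polynomial" "HOL-Computational_Algebra.Fraction_Field"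
begin

text \<open>The rational function field K(t) is modelled as the fraction field 'k poly fract.
  Points of P^1(K) are 'k option, with None playing the role of infinity.\<close>

text \<open>Reduction of alpha in K(t) modulo the place t = c: if alpha = p/q with q(c) nonzero,
  its value is p(c)/q(c) (independent of the representation); otherwise alpha has a pole
  at c and the value is infinity.\<close>
definition place_eval :: "'k::field poly fract \<Rightarrow> 'k \<Rightarrow> 'k option" where
  "place_eval \<alpha> c =
     (if \<exists>p q. \<alpha> = Fract p q \<and> poly q c \<noteq> 0
      then Some (THE v. \<exists>p q. \<alpha> = Fract p q \<and> poly q c \<noteq> 0 \<and> v = poly p c / poly q c)
      else None)"

definition f2 :: "'k::field \<Rightarrow> 'k option \<Rightarrow> 'k option" where
  "f2 c x = (case x of None \<Rightarrow> None | Some z \<Rightarrow> Some (z ^ 2 + c))"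

definition is_periodic :: "('a \<Rightarrow> 'a) \<Rightarrow> 'a \<Rightarrow> bool" where
  "is_periodic \<phi> y \<longleftrightarrow> (\<exists>n>0. (\<phi> ^^ n) y = y)"

definition exact_period :: "('a \<Rightarrow> 'a) \<Rightarrow> 'a \<Rightarrow> nat \<Rightarrow> bool" where
  "exact_period \<phi> y N \<longleftrightarrow> N > 0 \<and> (\<phi> ^^ N) y = y \<and> (\<forall>k. 0 < k \<and> k < N \<longrightarrow> (\<phi> ^^ k) y \<noteq> y)"

definition has_portrait :: "('a \<Rightarrow> 'a) \<Rightarrow> 'a \<Rightarrow> nat \<Rightarrow> nat \<Rightarrow> bool" where
  "has_portrait \<phi> x M N \<longleftrightarrow>
     is_periodic \<phi> ((\<phi> ^^ M) x) \<and> (\<forall>m<M. \<not> is_periodic \<phi> ((\<phi> ^^ m) x)) \<and>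
     exact_period \<phi> ((\<phi> ^^ M) x) N"

definition realizes_f2 :: "'k::field poly fract \<Rightarrow> nat \<Rightarrow> nat \<Rightarrow> bool" where
  "realizes_f2 \<alpha> M N \<longleftrightarrow> (\<exists>c. has_portrait (f2 c) (place_eval \<alpha> c) M N)"

end

theory Submission
  imports Defs
begin

text \<open>Write \<open>\<alpha> = p/q\<close> in lowest terms.  The 3-cycles of \<open>z\<^sup>2 + c\<close> are parametrised by a rational
  curve: \<open>c = c(s)\<close>, with cycle \<open>y\<^sub>0(s) \<mapsto> y\<^sub>1(s) \<mapsto> y\<^sub>2(s)\<close>.  For \<open>\<alpha> \<noteq> 0\<close> we need a parameter \<open>s\<close>
  with \<open>\<alpha>(c(s)) = y\<^sub>0(s) \<noteq> 0\<close>, i.e. a root of a coincidence polynomial \<open>E\<^sub>0\<close> avoiding finitely many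
  degenerate parameters.  If all roots of \<open>E\<^sub>0\<close> were degenerate, the same would hold for the
  polynomials \<open>E\<^sub>1, E\<^sub>2\<close> obtained by rotating the cycle, and the identity
  \<open>s E\<^sub>0 - (s + 1) E\<^sub>1 + E\<^sub>2 = 0\<close> would contradict the Mason--Stothers theorem, because the
  degenerate roots are too few (at most \<open>3 deg p\<close> plus a bounded number).  This gives portrait
  \<open>(0, 3)\<close>; for \<open>\<alpha> = 0\<close>, the point \<open>0\<close> has period 3 when \<open>c\<^sup>3 + 2c\<^sup>2 + c + 1 = 0\<close>.

  For \<open>M \<ge> 1\<close> apply this to \<open>\<beta> = -f\<^bsup>M-1\<^esup>(\<alpha>)\<close>, which is nonzero unless \<open>(\<alpha>, M) = (0, 1)\<close>: then
  \<open>f\<^bsup>M-1\<^esup>(\<alpha>(c)) = -\<beta>(c)\<close> is a preimage of the periodic point \<open>f(\<beta>(c))\<close> other than \<open>\<beta>(c)\<close>, so it is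
  strictly preperiodic with tail \<open>M\<close>.  Conversely \<open>0\<close> is the only preimage of \<open>c\<close>, so \<open>0\<close> never
  has tail 1.\<close>

section \<open>Polynomial preliminaries and the Mason--Stothers theorem\<close>

lemma size_proots_alg_closed:
  fixes p :: "'a::alg_closed_field poly"
  assumes "p \<noteq> 0"
  shows "size (proots p) = degree p"
proof -
  obtain A where A: "size A = degree p" "p = smult (lead_coeff p) (\<Prod>x\<in>#A. [:-x, 1:])"
    using alg_closed_imp_factorization[OF assms] by blast
  have "proots p = proots (\<Prod>x\<in>#A. [:-x, 1:])"
    using assms by (subst A(2)) simp
  also have "\<dots> = A"
  proof (induction A)
    case (add x A)
    have "(\<Prod>y\<in>#A. [:-y, 1:]) \<noteq> (0 :: 'a poly)"
      by (auto simp: prod_mset_zero_iff)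
    with add.IH show ?case
      by (simp add: proots_mult del: mult_pCons_left)
  qed simp
  finally show ?thesis
    using A(1) by simp
qed

lemma degree_eq_sum_order_roots:
  fixes p :: "'a::alg_closed_field poly"
  assumes "p \<noteq> 0"
  shows "degree p = (\<Sum>x | poly p x = 0. order x p)"
  using assms size_proots_alg_closed[OF assms]
  by (simp add: size_multiset_overloaded_eq)

definition wronskian :: "'a::idom poly \<Rightarrow> 'a poly \<Rightarrow> 'a poly" where
  "wronskian p q = pderiv p * q - p * pderiv q"

lemma order_le_Suc_order_pderiv_combination:
  fixes p W a b :: "'a::{idom,semiring_char_0} poly"
  assumes "p \<noteq> 0" "W \<noteq> 0" "W = pderiv p * a + p * b"
  shows "order x p \<le> Suc (order x W)"
proof (cases "poly p x = 0")
  case True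
  define n where "n = order x (pderiv p)"
  have "order x p = Suc n"
    unfolding n_def using order_pderiv[OF assms(1) True] .
  then have "[:-x, 1:] ^ n dvd pderiv p" "[:-x, 1:] ^ n dvd p"
    using order_divides[of x n] n_def by auto
  then have "[:-x, 1:] ^ n dvd W"
    using assms(3) by simp
  then show ?thesis
    using \<open>order x p = Suc n\<close> assms(2) by (simp add: order_divides)
qed (simp add: order_0I)

lemma degree_pderiv_mult_le:
  fixes p q :: "'a::{idom,semiring_char_0} poly"
  shows "degree (pderiv p * q) \<le> degree p + degree q - 1"
proof (cases "degree p = 0")
  case True
  then show ?thesis
    by (simp add: pderiv_eq_0_iff[THEN iffD2])
next
  case False
  then show ?thesis
    using degree_mult_le[of "pderiv p" q] by (simp add: degree_pderiv)
qed

lemma sum_order_le_degree_on: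
  fixes p :: "'a::idom poly"
  assumes "finite A" and "p \<noteq> 0"
  shows "(\<Sum>x\<in>A. order x p) \<le> degree p"
proof -
  have "(\<Sum>x\<in>A. order x p) = (\<Sum>x\<in>A \<inter> {x. poly p x = 0}. order x p)"
    using assms(1) by (intro sum.mono_neutral_right) (auto simp: order_root)
  also have "\<dots> \<le> (\<Sum>x | poly p x = 0. order x p)"
    using poly_roots_finite[OF assms(2)] by (intro sum_mono2) auto
  also have "\<dots> \<le> degree p"
    by (rule sum_order_le_degree[OF assms(2)])
  finally show ?thesis .
qed

lemma wronskian_nonzero:
  fixes a b :: "'a::{idom,semiring_char_0} poly"
  assumes "poly a x = 0" "poly b x \<noteq> 0" "degree a > 0"
  shows "wronskian a b \<noteq> 0"
proof
  assume "wronskian a b = 0"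
  then have eq: "a * pderiv b = pderiv a * b"
    by (simp add: wronskian_def)
  have "a \<noteq> 0" "b \<noteq> 0" "pderiv a \<noteq> 0"
    using assms by (auto simp: pderiv_eq_0_iff)
  then have "pderiv b \<noteq> 0"
    using eq by auto
  have "order x (a * pderiv b) = Suc (order x (pderiv a)) + order x (pderiv b)"
    using \<open>a \<noteq> 0\<close> \<open>pderiv b \<noteq> 0\<close> by (simp add: order_mult order_pderiv[OF \<open>a \<noteq> 0\<close> assms(1)])
  moreover have "order x (pderiv a * b) = order x (pderiv a)"
    using \<open>pderiv a \<noteq> 0\<close> \<open>b \<noteq> 0\<close> assms(2) by (simp add: order_mult order_0I)
  ultimately show False
    using eq by simp
qed

text \<open>The key to the Mason--Stothers theorem: a root of \<open>a b c\<close> of multiplicity \<open>k\<close> is a root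
  of multiplicity at least \<open>k - 1\<close> of the common Wronskian of any two of \<open>a, b, c\<close>.\<close>

lemma order_le_Suc_order_wronskian:
  fixes a b c :: "'a::{idom,semiring_char_0} poly"
  assumes sum: "a + b + c = 0" and coprime: "\<And>x. \<not> (poly a x = 0 \<and> poly b x = 0)"
    and nonzero: "a \<noteq> 0" "b \<noteq> 0" "c \<noteq> 0" "wronskian a b \<noteq> 0"
  shows "order x (a * b * c) \<le> Suc (order x (wronskian a b))"
proof -
  have c_eq: "c = - a - b"
    using sum by (simp add: eq_neg_iff_add_eq_0 algebra_simps)
  have W: "wronskian a b = pderiv a * b + a * (- pderiv b)"
    "wronskian a b = pderiv b * c + b * (- pderiv c)"
    "wronskian a b = pderiv c * a + c * (- pderiv a)"
    unfolding wronskian_def c_eq by (simp_all add: pderiv_diff pderiv_minus algebra_simps)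
  have split: "order x (a * b * c) = order x a + order x b + order x c"
    using nonzero by (simp add: order_mult)
  consider "poly a x = 0" | "poly b x = 0" | "poly a x \<noteq> 0" "poly b x \<noteq> 0"
    by blast
  then show ?thesis
  proof cases
    case 1
    then have "order x b = 0" "order x c = 0"
      using coprime[of x] c_eq by (auto intro!: order_0I)
    then show ?thesis
      using split order_le_Suc_order_pderiv_combination[OF nonzero(1,4) W(1)] by simp
  next
    case 2
    then have "order x a = 0" "order x c = 0"
      using coprime[of x] c_eq by (auto intro!: order_0I)
    then show ?thesis
      using split order_le_Suc_order_pderiv_combination[OF nonzero(2,4) W(2)] by simp
  next
    case 3
    then have "order x a = 0" "order x b = 0"
      by (auto intro!: order_0I)
    then show ?thesis
      using split order_le_Suc_order_pderiv_combination[OF nonzero(3,4) W(3)] by simp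
  qed
qed

theorem mason_stothers:
  fixes a b c :: "'a::{alg_closed_field,field_char_0} poly"
  assumes sum: "a + b + c = 0" and coprime: "\<And>x. \<not> (poly a x = 0 \<and> poly b x = 0)"
    and deg_a: "degree a > 0"
  shows "degree a < card {x. poly (a * b * c) x = 0}"
proof -
  obtain x0 where x0: "poly a x0 = 0"
    using alg_closed_imp_poly_has_root[OF deg_a] by blast
  have c_eq: "c = - a - b"
    using sum by (simp add: eq_neg_iff_add_eq_0 algebra_simps)
  have "poly b x0 \<noteq> 0"
    using coprime[of x0] x0 by auto
  then have nonzero: "a \<noteq> 0" "b \<noteq> 0" "c \<noteq> 0" "wronskian a b \<noteq> 0"
    using x0 c_eq deg_a wronskian_nonzero by auto
  define W where "W = wronskian a b"
  define R where "R = {x. poly (a * b * c) x = 0}"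
  have "finite R"
    unfolding R_def using nonzero by (intro poly_roots_finite) simp
  have W_bc: "W = pderiv b * c + b * (- pderiv c)"
    unfolding W_def wronskian_def c_eq by (simp add: pderiv_diff pderiv_minus algebra_simps)
  have "degree b + degree c > 0"
  proof (rule ccontr)
    assume "\<not> degree b + degree c > 0"
    then have "pderiv b = 0" "pderiv c = 0"
      by (simp_all add: pderiv_eq_0_iff)
    then show False
      using nonzero(4) W_bc by (simp add: W_def)
  qed
  have "degree W \<le> degree b + degree c - 1"
    unfolding W_bc using degree_pderiv_mult_le[of b c] degree_pderiv_mult_le[of c b]
    by (intro degree_add_le) (simp_all add: mult.commute add.commute)
  have "degree a + degree b + degree c = degree (a * b * c)"
    using nonzero by (simp add: degree_mult_eq)
  also have "\<dots> = (\<Sum>x\<in>R. order x (a * b * c))"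
    unfolding R_def by (rule degree_eq_sum_order_roots) (use nonzero in simp)
  also have "\<dots> \<le> (\<Sum>x\<in>R. Suc (order x W))"
    unfolding W_def using order_le_Suc_order_wronskian[OF sum coprime nonzero] by (intro sum_mono)
  also have "\<dots> = card R + (\<Sum>x\<in>R. order x W)"
    unfolding Suc_eq_plus1 sum.distrib by (simp add: add.commute)
  also have "(\<Sum>x\<in>R. order x W) \<le> degree W"
    using \<open>finite R\<close> nonzero(4) by (simp add: W_def sum_order_le_degree_on)
  finally show ?thesis
    using \<open>degree W \<le> _\<close> \<open>degree b + degree c > 0\<close> unfolding R_def by linarith
qed

lemma degree_diff_eq_left: "degree q < degree p \<Longrightarrow> degree (p - q) = degree p"
  for p q :: "'a::ab_group_add poly"
  using degree_add_eq_left[of "- q" p] by simp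

lemma degree_diff_eq_right: "degree p < degree q \<Longrightarrow> degree (p - q) = degree q"
  for p q :: "'a::ab_group_add poly"
  using degree_add_eq_right[of p "- q"] by simp

lemma prod_linear_factors_dvd:
  fixes p :: "'a::idom poly"
  assumes "finite S" and "\<And>w. w \<in> S \<Longrightarrow> poly p w = 0"
  shows "(\<Prod>w\<in>S. [:-w, 1:]) dvd p"
  using assms
proof (induction S arbitrary: p rule: finite_induct)
  case (insert x S)
  then obtain p' where p: "p = [:-x, 1:] * p'"
    by (metis dvdE insertI1 poly_eq_0_iff_dvd)
  have "(\<Prod>w\<in>S. [:-w, 1:]) dvd p'"
    using insert.prems insert.hyps(2) by (intro insert.IH) (force simp: p)
  then show ?case
    unfolding p prod.insert[OF insert.hyps] by (intro mult_dvd_mono dvd_refl)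
qed simp

lemma pderiv_sum: "pderiv (\<Sum>k\<in>A. f k) = (\<Sum>k\<in>A. pderiv (f k))"
  by (induction A rule: infinite_finite_induct) (auto simp: pderiv_add)

lemma smult_sum_right: "smult c (\<Sum>k\<in>A. f k) = (\<Sum>k\<in>A. smult c (f k))"
  by (induction A rule: infinite_finite_induct) (auto simp: smult_add_right)

lemma self_mult_pderiv_power: "v * pderiv (v ^ j) = smult (of_nat j) (v ^ j * pderiv v)"
  by (cases j) (simp_all add: pderiv_power_Suc algebra_simps del: power_Suc, simp add: algebra_simps)

section \<open>Homogenised pullbacks\<close>

text \<open>\<open>hom_pullback u v m r = v\<^sup>m \<cdot> r(u/v)\<close>, the degree-\<open>m\<close> homogenisation of \<open>r\<close> evaluated at
  \<open>(u, v)\<close>.\<close>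

definition hom_pullback :: "'a::comm_ring_1 poly \<Rightarrow> 'a poly \<Rightarrow> nat \<Rightarrow> 'a poly \<Rightarrow> 'a poly" where
  "hom_pullback u v m r = (\<Sum>k\<le>m. smult (coeff r k) (u ^ k * v ^ (m - k)))"

lemma poly_hom_pullback:
  "poly (hom_pullback u v m r) s = (\<Sum>k\<le>m. coeff r k * poly u s ^ k * poly v s ^ (m - k))"
  by (simp add: hom_pullback_def poly_sum mult.assoc)

lemma poly_hom_pullback_eq:
  fixes u v r :: "'a::field poly"
  assumes "poly v s \<noteq> 0" and "degree r \<le> m"
  shows "poly (hom_pullback u v m r) s = poly v s ^ m * poly r (poly u s / poly v s)"
proof -
  have "poly r (poly u s / poly v s) = (\<Sum>k\<le>m. coeff r k * (poly u s / poly v s) ^ k)"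
    unfolding poly_altdef using assms(2)
    by (intro sum.mono_neutral_left) (auto simp: coeff_eq_0)
  also have "poly v s ^ m * \<dots> = (\<Sum>k\<le>m. coeff r k * poly u s ^ k * poly v s ^ (m - k))"
    unfolding sum_distrib_left
  proof (intro sum.cong refl)
    fix k assume "k \<in> {..m}"
    then have "poly v s ^ m = poly v s ^ k * poly v s ^ (m - k)"
      by (simp flip: power_add)
    then show "poly v s ^ m * (coeff r k * (poly u s / poly v s) ^ k) =
               coeff r k * poly u s ^ k * poly v s ^ (m - k)"
      using assms(1) by (simp add: power_divide field_simps)
  qed
  finally show ?thesis
    by (simp add: poly_hom_pullback)
qed

lemma poly_hom_pullback_at_root:
  assumes "poly v s = 0"
  shows "poly (hom_pullback u v m r) s = coeff r m * poly u s ^ m"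
proof -
  have "poly (hom_pullback u v m r) s = (\<Sum>k\<le>m. if k = m then coeff r m * poly u s ^ m else 0)"
    unfolding poly_hom_pullback using assms by (intro sum.cong refl) (auto simp: power_0_left)
  then show ?thesis
    by simp
qed

lemma poly_hom_pullback_scale:
  assumes "poly u t = a * poly u s" and "poly v t = a * poly v s"
  shows "poly (hom_pullback u v m r) t = a ^ m * poly (hom_pullback u v m r) s"
  unfolding poly_hom_pullback sum_distrib_left
proof (intro sum.cong refl)
  fix k assume "k \<in> {..m}"
  then have "a ^ m = a ^ k * a ^ (m - k)"
    by (simp flip: power_add)
  then show "coeff r k * poly u t ^ k * poly v t ^ (m - k) =
             a ^ m * (coeff r k * poly u s ^ k * poly v s ^ (m - k))"
    using assms by (simp add: power_mult_distrib)
qed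

lemma hom_pullback_Suc:
  assumes "coeff r (Suc n) = 0"
  shows "hom_pullback u v (Suc n) r = v * hom_pullback u v n r"
proof -
  have "hom_pullback u v (Suc n) r = (\<Sum>k\<le>n. v * smult (coeff r k) (u ^ k * v ^ (n - k)))"
    unfolding hom_pullback_def using assms
    by (simp add: atMost_Suc Suc_diff_le mult_ac)
  then show ?thesis
    by (simp add: hom_pullback_def sum_distrib_left)
qed

lemma degree_hom_pullback:
  fixes u v r :: "'a::idom poly"
  assumes "u \<noteq> 0" "v \<noteq> 0" "degree v < degree u" "r \<noteq> 0" "degree r \<le> m"
  shows "degree (hom_pullback u v m r) = degree v * m + (degree u - degree v) * degree r"
proof -
  define d where "d = degree r"
  define e where "e k = degree v * m + (degree u - degree v) * k" for k
  have deg_term: "degree (u ^ k * v ^ (m - k)) = e k" if "k \<le> m" for k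
    using assms(1-3) that by (simp add: degree_mult_eq degree_power_eq e_def algebra_simps)
  have "e k < e d" if "k < d" for k
    using that assms(3) by (simp add: e_def)
  then have coeff_term: "coeff (smult (coeff r k) (u ^ k * v ^ (m - k))) (e d) =
      (if k = d then coeff r d * lead_coeff (u ^ d * v ^ (m - d)) else 0)" if "k \<le> m" for k
    using deg_term[OF that] deg_term[of d] that assms(5)
    by (cases k d rule: linorder_cases) (auto simp: d_def coeff_eq_0)
  have "degree (hom_pullback u v m r) \<le> e d"
    unfolding hom_pullback_def
  proof (intro degree_sum_le)
    fix k assume "k \<in> {..m}"
    then show "degree (smult (coeff r k) (u ^ k * v ^ (m - k))) \<le> e d"
      using deg_term[of k] le_degree[of r k] assms(3)
      by (cases "coeff r k = 0") (auto simp: d_def e_def)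
  qed simp
  moreover have "coeff (hom_pullback u v m r) (e d) =
      (\<Sum>k\<le>m. if k = d then coeff r d * lead_coeff (u ^ d * v ^ (m - d)) else 0)"
    unfolding hom_pullback_def coeff_sum by (intro sum.cong refl coeff_term) simp
  then have "coeff (hom_pullback u v m r) (e d) = coeff r d * lead_coeff (u ^ d * v ^ (m - d))"
    using assms(5) by (simp add: d_def)
  then have "coeff (hom_pullback u v m r) (e d) \<noteq> 0"
    using assms(1,2,4) by (simp add: d_def lead_coeff_mult lead_coeff_power)
  ultimately show ?thesis
    using le_degree unfolding e_def d_def by (meson antisym)
qed

lemma pderiv_hom_pullback:
  fixes u v r :: "'a::idom poly"
  shows "v * pderiv (hom_pullback u v m r) =
    smult (of_nat m) (pderiv v * hom_pullback u v m r) +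
    wronskian u v * (\<Sum>k\<le>m. smult (coeff r k * of_nat k) (u ^ (k - 1) * v ^ (m - k)))"
proof -
  have deriv_term: "v * pderiv (u ^ k * v ^ (m - k)) =
      smult (of_nat m) (pderiv v * (u ^ k * v ^ (m - k))) +
      wronskian u v * smult (of_nat k) (u ^ (k - 1) * v ^ (m - k))"
    if "k \<le> m" for k
  proof -
    obtain j where m: "m = k + j"
      using \<open>k \<le> m\<close> le_Suc_ex by blast
    have "v * pderiv (u ^ k * v ^ j) = u ^ k * (v * pderiv (v ^ j)) + v ^ j * v * pderiv (u ^ k)"
      by (simp add: pderiv_mult algebra_simps)
    also have "\<dots> = u ^ k * smult (of_nat j) (v ^ j * pderiv v) +
        v ^ j * v * smult (of_nat k) (u ^ (k - 1) * pderiv u)"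
      by (simp only: self_mult_pderiv_power pderiv_power[of u k])
    also have "\<dots> = smult (of_nat m) (pderiv v * (u ^ k * v ^ j)) +
        wronskian u v * smult (of_nat k) (u ^ (k - 1) * v ^ j)"
      by (cases k) (simp_all add: m wronskian_def algebra_simps smult_add_left smult_diff_right)
    finally show ?thesis
      by (simp add: m)
  qed
  have "v * pderiv (hom_pullback u v m r) = (\<Sum>k\<le>m. smult (coeff r k) (v * pderiv (u ^ k * v ^ (m - k))))"
    by (simp add: hom_pullback_def pderiv_sum pderiv_smult sum_distrib_left)
  also have "\<dots> = (\<Sum>k\<le>m. smult (coeff r k) (smult (of_nat m) (pderiv v * (u ^ k * v ^ (m - k))) +
      wronskian u v * smult (of_nat k) (u ^ (k - 1) * v ^ (m - k))))"
    by (intro sum.cong refl) (simp add: deriv_term)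
  also have "\<dots> = smult (of_nat m) (pderiv v * hom_pullback u v m r) +
    wronskian u v * (\<Sum>k\<le>m. smult (coeff r k * of_nat k) (u ^ (k - 1) * v ^ (m - k)))"
    by (simp add: hom_pullback_def smult_add_right sum.distrib sum_distrib_left
        mult_smult_right smult_sum_right smult_smult mult.commute)
  finally show ?thesis .
qed

section \<open>Periodic points and portraits\<close>

lemma funpow_funpow: "(f ^^ m) ((f ^^ n) x) = (f ^^ (m + n)) x"
  by (simp add: funpow_add)

lemma funpow_mult_fixpoint: "(f ^^ n) x = x \<Longrightarrow> (f ^^ (n * k)) x = x"
  by (induction k) (simp_all add: funpow_add)

lemma is_periodic_funpow: "is_periodic \<phi> z \<Longrightarrow> is_periodic \<phi> ((\<phi> ^^ k) z)"
  unfolding is_periodic_def by (metis comp_apply funpow_add add.commute)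

lemma exact_period_imp_periodic: "exact_period \<phi> y N \<Longrightarrow> is_periodic \<phi> y"
  unfolding exact_period_def is_periodic_def by blast

lemma exact_period_3I:
  assumes "(\<phi> ^^ 3) y = y" and "\<phi> y \<noteq> y" and "\<phi> (\<phi> y) \<noteq> y"
  shows "exact_period \<phi> y 3"
  unfolding exact_period_def
proof (intro conjI allI impI)
  fix k :: nat
  assume "0 < k \<and> k < 3"
  then have "k = 1 \<or> k = 2"
    by arith
  then show "(\<phi> ^^ k) y \<noteq> y"
    using assms by (auto simp: numeral_2_eq_2)
qed (use assms in auto)

lemma exact_period_step:
  assumes "exact_period \<phi> w N"
  shows "exact_period \<phi> (\<phi> w) N"
  unfolding exact_period_def
proof (intro conjI allI impI)
  have w: "N > 0" "(\<phi> ^^ N) w = w" "\<And>k. 0 < k \<Longrightarrow> k < N \<Longrightarrow> (\<phi> ^^ k) w \<noteq> w"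
    using assms by (auto simp: exact_period_def)
  then show "N > 0" "(\<phi> ^^ N) (\<phi> w) = \<phi> w"
    by (simp_all flip: funpow_swap1)
  fix k assume k: "0 < k \<and> k < N"
  show "(\<phi> ^^ k) (\<phi> w) \<noteq> \<phi> w"
  proof
    assume "(\<phi> ^^ k) (\<phi> w) = \<phi> w"
    then have "(\<phi> ^^ (N - 1)) ((\<phi> ^^ k) (\<phi> w)) = (\<phi> ^^ (N - 1)) (\<phi> w)"
      by simp
    moreover have "(\<phi> ^^ (N - 1)) ((\<phi> ^^ k) ((\<phi> ^^ 1) w)) = (\<phi> ^^ k) ((\<phi> ^^ N) w)"
      "(\<phi> ^^ (N - 1)) ((\<phi> ^^ 1) w) = (\<phi> ^^ N) w"
      using w(1) by (simp_all only: funpow_funpow) (simp_all add: ac_simps)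
    ultimately show False
      using w(2,3) k by simp
  qed
qed

lemma has_portrait_0I: "exact_period \<phi> x N \<Longrightarrow> has_portrait \<phi> x 0 N"
  by (simp add: has_portrait_def exact_period_imp_periodic)

text \<open>A common period \<open>k\<close> of \<open>y\<close> and \<open>w\<close> gives
  \<open>y = \<phi>\<^bsup>k-1\<^esup>(\<phi> y) = \<phi>\<^bsup>k-1\<^esup>(\<phi> w) = w\<close>.\<close>

lemma periodic_eq_if_same_image:
  assumes "is_periodic \<phi> y" and "is_periodic \<phi> w" and "\<phi> y = \<phi> w"
  shows "y = w"
proof -
  obtain n N where n: "n > 0" "(\<phi> ^^ n) y = y" and N: "N > 0" "(\<phi> ^^ N) w = w"
    using assms(1,2) unfolding is_periodic_def by blast
  then obtain k where k: "n * N = Suc k"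
    by (metis gr0_conv_Suc nat_0_less_mult_iff)
  have "y = (\<phi> ^^ Suc k) y"
    using funpow_mult_fixpoint[OF n(2), of N] k by simp
  also have "\<dots> = (\<phi> ^^ Suc k) w"
    using assms(3) by (simp only: funpow_Suc_right comp_apply)
  also have "\<dots> = w"
    using funpow_mult_fixpoint[OF N(2), of n] k by (simp add: mult.commute)
  finally show ?thesis .
qed

lemma has_portrait_SucI:
  assumes w: "exact_period \<phi> w N" and y: "\<phi> y = \<phi> w" "y \<noteq> w" and x: "(\<phi> ^^ M) x = y"
  shows "has_portrait \<phi> x (Suc M) N"
proof -
  have "\<not> is_periodic \<phi> y"
    using periodic_eq_if_same_image[OF _ exact_period_imp_periodic[OF w] y(1)] y(2) by blast
  have tail: "\<not> is_periodic \<phi> ((\<phi> ^^ m) x)" if "m < Suc M" for m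
  proof
    assume "is_periodic \<phi> ((\<phi> ^^ m) x)"
    then have "is_periodic \<phi> ((\<phi> ^^ (M - m)) ((\<phi> ^^ m) x))"
      by (rule is_periodic_funpow)
    also have "(\<phi> ^^ (M - m)) ((\<phi> ^^ m) x) = y"
      using that x by (simp add: funpow_funpow)
    finally show False
      using \<open>\<not> is_periodic \<phi> y\<close> by simp
  qed
  have "(\<phi> ^^ Suc M) x = \<phi> w" "exact_period \<phi> (\<phi> w) N"
    using x y exact_period_step[OF w] by simp_all
  then show ?thesis
    unfolding has_portrait_def using tail exact_period_imp_periodic[of \<phi> "\<phi> w" N] by simp
qed

definition quad_map :: "'a::comm_ring_1 \<Rightarrow> 'a \<Rightarrow> 'a" where
  "quad_map c z = z\<^sup>2 + c"

lemma f2_Some: "f2 c (Some z) = Some (quad_map c z)"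
  by (simp add: f2_def quad_map_def)

lemma f2_funpow_Some: "(f2 c ^^ n) (Some v) = Some ((quad_map c ^^ n) v)"
  by (induction n) (simp_all add: f2_def quad_map_def)

lemma exact_period_f2_Some: "exact_period (f2 c) (Some y) N \<longleftrightarrow> exact_period (quad_map c) y N"
  by (simp add: exact_period_def f2_funpow_Some)

text \<open>The critical point \<open>0\<close> is the only preimage of \<open>c\<close>, so it cannot have tail length 1.\<close>

lemma not_has_portrait_f2_0_1: "\<not> has_portrait (f2 c) (Some (0 :: 'a::field)) 1 N"
proof
  assume portrait: "has_portrait (f2 c) (Some 0) 1 N"
  then have "N > 0" "(f2 c ^^ N) (f2 c (Some 0)) = f2 c (Some 0)"
    by (simp_all add: has_portrait_def exact_period_def)
  then have "quad_map c ((quad_map c ^^ N) 0) = quad_map c 0"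
    by (simp add: f2_Some f2_funpow_Some flip: funpow_swap1)
  then have "(quad_map c ^^ N) 0 = 0"
    by (simp add: quad_map_def)
  then have "(f2 c ^^ N) (Some 0) = Some 0"
    by (simp add: f2_funpow_Some)
  then have "is_periodic (f2 c) (Some 0)"
    using \<open>N > 0\<close> by (auto simp: is_periodic_def)
  then show False
    using portrait by (force simp: has_portrait_def)
qed

section \<open>Elements of \<open>K(t)\<close> and their reductions\<close>

lemma Fract_coprime_repr:
  fixes a b :: "'a::field poly"
  assumes "b \<noteq> 0"
  shows "\<exists>p q. Fract a b = Fract p q \<and> q \<noteq> 0 \<and> (\<forall>x. \<not> (poly p x = 0 \<and> poly q x = 0))"
  using assms
proof (induction "degree b" arbitrary: a b rule: less_induct)
  case less
  show ?case
  proof (cases "\<exists>x. poly a x = 0 \<and> poly b x = 0")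
    case True
    then obtain x a' b' where ab: "a = [:-x, 1:] * a'" "b = [:-x, 1:] * b'"
      by (metis dvdE poly_eq_0_iff_dvd)
    then have "b' \<noteq> 0"
      using less.prems by auto
    then have "degree b' < degree b"
      unfolding ab by (simp add: degree_mult_eq del: mult_pCons_left)
    moreover have "Fract a b = Fract a' b'"
      using \<open>b' \<noteq> 0\<close> less.prems by (simp add: ab eq_fract del: mult_pCons_left)
    ultimately show ?thesis
      using less.hyps[OF _ \<open>b' \<noteq> 0\<close>] by metis
  qed (use less.prems in blast)
qed

lemma fract_coprime_repr:
  fixes \<alpha> :: "'a::field poly fract"
  obtains p q where "\<alpha> = Fract p q" "q \<noteq> 0" "\<And>x. \<not> (poly p x = 0 \<and> poly q x = 0)"
  using Fract_coprime_repr by (cases \<alpha>) blast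

lemma place_eval_Fract:
  fixes p q :: "'a::field poly"
  assumes "q \<noteq> 0" and "poly q c \<noteq> 0"
  shows "place_eval (Fract p q) c = Some (poly p c / poly q c)"
proof -
  have "v = poly p c / poly q c"
    if "Fract p q = Fract p' q'" "poly q' c \<noteq> 0" "v = poly p' c / poly q' c" for p' q' v
  proof -
    have "q' \<noteq> 0"
      using that(2) by auto
    then have "poly p c * poly q' c = poly p' c * poly q c"
      using that(1) assms(1) by (metis eq_fract(1) poly_mult)
    also have "\<dots> = v * poly q c * poly q' c"
      using that(2,3) by simp
    finally show ?thesis
      using that(2) assms(2) by (simp add: field_simps)
  qed
  then have "(THE v. \<exists>p' q'. Fract p q = Fract p' q' \<and> poly q' c \<noteq> 0 \<and> v = poly p' c / poly q' c)
      = poly p c / poly q c"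
    using assms(2) by (intro the_equality) blast+
  then show ?thesis
    unfolding place_eval_def using assms(2) by auto
qed

lemma place_eval_0: "place_eval 0 c = Some (0 :: 'a::field)"
  using place_eval_Fract[of 1 c 0] by (simp add: Zero_fract_def)

primrec quad_iter_num :: "'a::comm_ring_1 poly \<Rightarrow> 'a poly \<Rightarrow> nat \<Rightarrow> 'a poly" where
  "quad_iter_num p q 0 = p"
| "quad_iter_num p q (Suc n) = (quad_iter_num p q n)\<^sup>2 + [:0, 1:] * q ^ 2 ^ Suc n"

lemma poly_quad_iter_num:
  fixes p q :: "'a::field poly"
  assumes "poly q c \<noteq> 0"
  shows "poly (quad_iter_num p q n) c / poly q c ^ 2 ^ n = (quad_map c ^^ n) (poly p c / poly q c)"
proof (induction n)
  case (Suc n)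
  have "poly (quad_iter_num p q (Suc n)) c / poly q c ^ 2 ^ Suc n =
      (poly (quad_iter_num p q n) c / poly q c ^ 2 ^ n)\<^sup>2 + c"
    using assms by (simp add: field_simps power2_eq_square power_mult_distrib flip: power_add mult_2)
  then show ?case
    using Suc by (simp add: quad_map_def)
qed simp

lemma quad_iter_num_coprime:
  fixes p q :: "'a::field poly"
  assumes "\<And>x. \<not> (poly p x = 0 \<and> poly q x = 0)"
  shows "\<not> (poly (quad_iter_num p q n) x = 0 \<and> poly (q ^ 2 ^ n) x = 0)"
  using assms by (induction n) (auto simp: power_0_left)

lemma quad_iter_num_nonzero:
  fixes p q :: "'a::idom poly"
  assumes "q \<noteq> 0" and "p \<noteq> 0 \<or> n > 0"
  shows "quad_iter_num p q n \<noteq> 0"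
proof (cases n)
  case (Suc k)
  define P where "P = quad_iter_num p q k"
  have "P\<^sup>2 \<noteq> - ([:0, 1:] * q ^ 2 ^ Suc k)"
  proof
    assume "P\<^sup>2 = - ([:0, 1:] * q ^ 2 ^ Suc k)"
    then have "degree (P\<^sup>2) = degree ([:0, 1:] * q ^ 2 ^ Suc k)"
      by simp
    moreover have "degree (P\<^sup>2) = 2 * degree P"
      by (cases "P = 0") (simp_all add: degree_power_eq)
    moreover have "degree ([:0, 1:] * q ^ 2 ^ Suc k) = 1 + 2 * (2 ^ k * degree q)"
      using assms(1) by (simp add: degree_mult_eq degree_power_eq)
    ultimately show False
      by presburger
  qed
  then show ?thesis
    unfolding Suc P_def by (simp only: quad_iter_num.simps eq_neg_iff_add_eq_0) simp
qed (use assms in simp)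

section \<open>The rational curve of 3-cycles of \<open>z\<^sup>2 + c\<close>\<close>

text \<open>The points of exact period 3 of \<open>z\<^sup>2 + c\<close> form a rational curve: for a parameter \<open>s\<close>,
  \<open>c = per3_c_num(s) / per3_c_den(s)\<close> and the values \<open>y\<^sub>k = per3_y_num\<^sub>k(s) / per3_y_den(s)\<close>
  (\<open>k = 0, 1, 2\<close>) form a 3-cycle \<open>y\<^sub>0 \<mapsto> y\<^sub>1 \<mapsto> y\<^sub>2 \<mapsto> y\<^sub>0\<close>.  The order-3 automorphism
  \<open>per3_rot s = -(s + 1) / s\<close> of the curve shifts the cycle.  Its fixed points, the roots of
  \<open>s\<^sup>2 + s + 1\<close>, lie over the values of \<open>c\<close> at which a fixed point has a primitive cube root
  of unity as multiplier; there the cycle collapses onto that fixed point.  The parameters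
  \<open>s = 0, -1\<close> are the cusps, lying over \<open>c = \<infinity>\<close>.\<close>

definition per3_c_num :: "'a::comm_ring_1 poly" where
  "per3_c_num = [:-1, -4, -9, -8, -4, -2, -1:]"

definition per3_y_den :: "'a::comm_ring_1 poly" where
  "per3_y_den = [:0, 2, 2:]"

definition per3_c_den :: "'a::comm_ring_1 poly" where
  "per3_c_den = per3_y_den ^ 2"

definition per3_y_num0 :: "'a::comm_ring_1 poly" where
  "per3_y_num0 = [:1, 1, 2, 1:]"

definition per3_y_num1 :: "'a::comm_ring_1 poly" where
  "per3_y_num1 = [:-1, -1, 0, 1:]"

definition per3_y_num2 :: "'a::comm_ring_1 poly" where
  "per3_y_num2 = [:-1, -3, -2, -1:]"

definition per3_rot :: "'a::field \<Rightarrow> 'a" where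
  "per3_rot s = - (s + 1) / s"

lemma poly_per3_c_num: "poly per3_c_num (s::'a::field) = - (s^6 + 2*s^5 + 4*s^4 + 8*s^3 + 9*s^2 + 4*s + 1)"
  by (simp add: per3_c_num_def eval_nat_numeral; algebra)

lemma poly_per3_y_den: "poly per3_y_den (s::'a::field) = 2 * s * (s + 1)"
  by (simp add: per3_y_den_def; algebra)

lemma poly_per3_c_den: "poly per3_c_den (s::'a::field) = (poly per3_y_den s)\<^sup>2"
  by (simp add: per3_c_den_def)

lemma poly_per3_y_num0: "poly per3_y_num0 (s::'a::field) = s^3 + 2*s^2 + s + 1"
  by (simp add: per3_y_num0_def eval_nat_numeral; algebra)

lemma poly_per3_y_num1: "poly per3_y_num1 (s::'a::field) = s^3 - s - 1"
  by (simp add: per3_y_num1_def eval_nat_numeral; algebra)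

lemma poly_per3_y_num2: "poly per3_y_num2 (s::'a::field) = - (s^3) - 2*s^2 - 3*s - 1"
  by (simp add: per3_y_num2_def eval_nat_numeral; algebra)

lemmas poly_per3 = poly_per3_c_num poly_per3_y_den poly_per3_c_den
  poly_per3_y_num0 poly_per3_y_num1 poly_per3_y_num2

lemma per3_cycle:
  fixes s :: "'a::field"
  shows "(poly per3_y_num0 s)\<^sup>2 + poly per3_c_num s = poly per3_y_den s * poly per3_y_num1 s"
    and "(poly per3_y_num1 s)\<^sup>2 + poly per3_c_num s = poly per3_y_den s * poly per3_y_num2 s"
    and "(poly per3_y_num2 s)\<^sup>2 + poly per3_c_num s = poly per3_y_den s * poly per3_y_num0 s"
  by (simp_all add: poly_per3) algebra+

lemma per3_rot_poly:
  fixes s :: "'a::field"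
  assumes "s \<noteq> 0"
  shows "poly per3_c_num (per3_rot s) = poly per3_c_num s / s^6"
    and "poly per3_c_den (per3_rot s) = poly per3_c_den s / s^6"
    and "poly per3_y_den (per3_rot s) = poly per3_y_den s / s^3"
    and "poly per3_y_num0 (per3_rot s) = poly per3_y_num1 s / s^3"
    and "poly per3_y_num1 (per3_rot s) = poly per3_y_num2 s / s^3"
  using assms
  by (simp_all add: poly_per3 per3_rot_def field_simps; simp add: algebra_simps eval_nat_numeral)+

lemma per3_rot_eq_0_iff:
  fixes s :: "'a::field"
  assumes "s \<noteq> 0"
  shows "per3_rot s = 0 \<longleftrightarrow> s = -1"
  using assms by (auto simp: per3_rot_def add_eq_0_iff2 minus_equation_iff)

lemma per3_rot_neq_minus_1: "s \<noteq> 0 \<Longrightarrow> per3_rot s \<noteq> (-1 :: 'a::field)"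
  by (simp add: per3_rot_def field_simps)

lemma inj_on_per3_rot: "inj_on (per3_rot :: 'a::field \<Rightarrow> 'a) (- {0})"
  by (rule inj_onI) (simp add: per3_rot_def field_simps; simp add: algebra_simps)

lemma per3_rot_omega_iff:
  fixes s :: "'a::field"
  assumes "s \<noteq> 0"
  shows "(per3_rot s)\<^sup>2 + per3_rot s + 1 = 0 \<longleftrightarrow> s\<^sup>2 + s + 1 = 0"
proof -
  have "(per3_rot s)\<^sup>2 + per3_rot s + 1 = (s\<^sup>2 + s + 1) / s\<^sup>2"
    using assms unfolding per3_rot_def by (simp add: field_simps; algebra)
  then show ?thesis
    using assms by simp
qed

lemma per3_rot_omega:
  fixes w :: "'a::field"
  assumes "w\<^sup>2 + w + 1 = 0"
  shows "per3_rot w = w"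
proof -
  have "w \<noteq> 0"
    using assms by auto
  moreover have "- (w + 1) - w * w = - (w\<^sup>2 + w + 1)"
    by (simp add: power2_eq_square algebra_simps)
  then have "- (w + 1) = w * w"
    using assms by simp
  ultimately show ?thesis
    unfolding per3_rot_def by (simp add: field_simps)
qed

lemma per3_omega_values:
  fixes w :: "'a::field"
  assumes "w\<^sup>2 + w + 1 = 0"
  shows "poly per3_y_den w = -2" and "poly per3_c_den w = 4"
proof -
  have "poly per3_y_den w = 2 * (w\<^sup>2 + w + 1) - 2"
    by (simp add: poly_per3; algebra)
  then show "poly per3_y_den w = -2"
    using assms by simp
  then show "poly per3_c_den w = 4"
    by (simp add: poly_per3_c_den)
qed

lemma per3_wronskian_omega:
  fixes w :: "'a::field"
  assumes "w\<^sup>2 + w + 1 = 0"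
  shows "poly (wronskian per3_c_num per3_c_den) w = 0"
proof -
  have "poly (wronskian per3_c_num per3_c_den) w =
      (w\<^sup>2 + w + 1) * (8*w + 32*w^2 + 40*w^3 + 16*w^4 - 16*w^5 - 24*w^6 - 8*w^7)"
    by (simp add: wronskian_def per3_c_num_def per3_c_den_def per3_y_den_def pderiv_pCons
        eval_nat_numeral; algebra)
  then show ?thesis
    using assms by simp
qed

lemma per3_y_wronskian_omega:
  fixes w :: "'a::field_char_0"
  assumes "w\<^sup>2 + w + 1 = 0"
  shows "poly (wronskian per3_y_num0 per3_y_den) w \<noteq> 0"
    and "poly (wronskian per3_y_num1 per3_y_den) w \<noteq> 0"
    and "poly (wronskian per3_y_num2 per3_y_den) w \<noteq> 0"
proof -
  have "poly (wronskian per3_y_num0 per3_y_den) w = - 4 * w"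
    "poly (wronskian per3_y_num1 per3_y_den) w = - 4 * w\<^sup>2"
    "poly (wronskian per3_y_num2 per3_y_den) w = - 4"
    using assms by (simp_all add: wronskian_def per3_y_num0_def per3_y_num1_def per3_y_num2_def
        per3_y_den_def pderiv_pCons eval_nat_numeral) algebra+
  moreover have "w \<noteq> 0"
    using assms by auto
  ultimately show "poly (wronskian per3_y_num0 per3_y_den) w \<noteq> 0"
    and "poly (wronskian per3_y_num1 per3_y_den) w \<noteq> 0"
    and "poly (wronskian per3_y_num2 per3_y_den) w \<noteq> 0"
    by simp_all
qed

lemma per3_y_num0_root:
  fixes s :: "'a::field"
  assumes "poly per3_y_num0 s = 0"
  shows "poly per3_c_num s = s * poly per3_c_den s"
proof -
  have "poly per3_c_num s - s * poly per3_c_den s = poly per3_y_num0 s * (-1 - 3*s - 4*s^2 - s^3)"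
    by (simp add: poly_per3; algebra)
  then show ?thesis
    using assms by simp
qed

lemma per3_y_num0_y_num1_coprime:
  fixes x :: "'a::field_char_0"
  shows "\<not> (poly per3_y_num0 x = 0 \<and> poly per3_y_num1 x = 0)"
proof
  assume roots: "poly per3_y_num0 x = 0 \<and> poly per3_y_num1 x = 0"
  have "x\<^sup>2 + x + 1 = (poly per3_y_num0 x - poly per3_y_num1 x) / 2"
    by (simp add: poly_per3 field_simps; algebra)
  then have omega: "x\<^sup>2 + x + 1 = 0"
    using roots by simp
  have "poly per3_y_num0 x = (x\<^sup>2 + x + 1) * (x + 1) - x"
    by (simp add: poly_per3; algebra)
  then show False
    using roots omega by simp
qed

lemma exact_period_per3_cycle:
  fixes s :: "'a::field_char_0"
  assumes "s \<noteq> 0" "s \<noteq> -1" "s\<^sup>2 + s + 1 \<noteq> 0"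
  shows "exact_period (quad_map (poly per3_c_num s / poly per3_c_den s))
    (poly per3_y_num0 s / poly per3_y_den s) 3"
proof -
  define c where "c = poly per3_c_num s / poly per3_c_den s"
  define y where "y g = poly g s / poly per3_y_den s" for g :: "'a poly"
  have d: "poly per3_y_den s \<noteq> 0"
    using assms by (simp add: poly_per3 add_eq_0_iff2)
  have step: "quad_map c (y per3_y_num0) = y per3_y_num1" "quad_map c (y per3_y_num1) = y per3_y_num2"
    "quad_map c (y per3_y_num2) = y per3_y_num0"
    using per3_cycle[of s] d unfolding quad_map_def y_def c_def poly_per3_c_den
    by (simp_all add: field_simps power2_eq_square)
  have diff: "s\<^sup>2 + s + 1 = (poly per3_y_num0 s - poly per3_y_num1 s) / 2"
    "(s + 1) * (s\<^sup>2 + s + 1) = (poly per3_y_num0 s - poly per3_y_num2 s) / 2"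
    by (simp_all add: poly_per3 field_simps) algebra+
  have "poly per3_y_num1 s \<noteq> poly per3_y_num0 s"
  proof
    assume "poly per3_y_num1 s = poly per3_y_num0 s"
    with diff(1) assms(3) show False
      by simp
  qed
  moreover have "poly per3_y_num2 s \<noteq> poly per3_y_num0 s"
  proof
    assume "poly per3_y_num2 s = poly per3_y_num0 s"
    with diff(2) have "(s + 1) * (s\<^sup>2 + s + 1) = 0"
      by simp
    with assms show False
      by (simp add: add_eq_0_iff2)
  qed
  ultimately have "exact_period (quad_map c) (y per3_y_num0) 3"
    using d by (intro exact_period_3I) (simp_all add: step numeral_3_eq_3, simp_all add: y_def)
  then show ?thesis
    by (simp add: c_def y_def)
qed

lemma exact_period_3_zero:
  fixes c :: "'a::field"
  assumes "poly per3_y_num0 c = 0"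
  shows "exact_period (quad_map c) 0 3"
proof (rule exact_period_3I)
  have "c \<noteq> 0" "c + 1 \<noteq> 0"
    using assms by (auto simp: poly_per3 add_eq_0_iff2)
  moreover have "quad_map c (quad_map c 0) = c * (c + 1)"
    by (simp add: quad_map_def power2_eq_square algebra_simps)
  ultimately show "quad_map c 0 \<noteq> 0" "quad_map c (quad_map c 0) \<noteq> 0"
    by (simp_all add: quad_map_def)
  have "(c\<^sup>2 + c)\<^sup>2 + c = c * poly per3_y_num0 c"
    by (simp add: poly_per3; algebra)
  then show "(quad_map c ^^ 3) 0 = 0"
    using assms by (simp add: quad_map_def numeral_3_eq_3)
qed

abbreviation per3_pullback :: "nat \<Rightarrow> 'a::comm_ring_1 poly \<Rightarrow> 'a poly" where
  "per3_pullback m r \<equiv> hom_pullback per3_c_num per3_c_den m r"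

lemma degree_per3_pullback:
  fixes r :: "'a::field_char_0 poly"
  assumes "r \<noteq> 0" and "degree r \<le> m"
  shows "degree (per3_pullback m r) = 4 * m + 2 * degree r"
proof -
  have "per3_y_den \<noteq> (0 :: 'a poly)"
    by (simp add: per3_y_den_def)
  then have "degree (per3_c_den :: 'a poly) = 4"
    by (simp add: per3_c_den_def degree_power_eq per3_y_den_def)
  moreover have "degree (per3_c_num :: 'a poly) = 6"
    by (simp add: per3_c_num_def)
  ultimately show ?thesis
    using assms \<open>per3_y_den \<noteq> 0\<close>
    by (subst degree_hom_pullback) (auto simp: per3_c_den_def per3_c_num_def)
qed

lemma poly_per3_pullback_rot:
  fixes r :: "'a::field poly"
  assumes "s \<noteq> 0"
  shows "poly (per3_pullback m r) (per3_rot s) = poly (per3_pullback m r) s / s ^ (6 * m)"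
proof -
  have "poly (per3_pullback m r) (per3_rot s) = (1 / s ^ 6) ^ m * poly (per3_pullback m r) s"
    using assms by (intro poly_hom_pullback_scale) (simp_all add: per3_rot_poly)
  then show ?thesis
    by (simp add: power_mult power_one_over)
qed

lemma poly_per3_pullback_0_minus_1:
  fixes r :: "'a::field poly"
  shows "poly (per3_pullback m r) 0 = coeff r m * (-1) ^ m"
    and "poly (per3_pullback m r) (-1) = coeff r m * (-1) ^ m"
  by (simp_all add: poly_hom_pullback_at_root poly_per3)

lemma poly_pderiv_per3_pullback_omega:
  fixes r :: "'a::field poly"
  assumes "w\<^sup>2 + w + 1 = 0"
  shows "poly per3_c_den w * poly (pderiv (per3_pullback m r)) w =
    of_nat m * poly (pderiv per3_c_den) w * poly (per3_pullback m r) w"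
  using arg_cong[OF pderiv_hom_pullback, of "\<lambda>f. poly f w" per3_c_den per3_c_num m r]
    per3_wronskian_omega[OF assms]
  by (simp add: mult.assoc)

section \<open>Coincidence polynomials\<close>

text \<open>For coprime \<open>p, q\<close> and \<open>m \<ge> deg p, deg q\<close>, the roots \<open>s\<close> of \<open>per3_coinc g m p q\<close> away
  from the cusps are the parameters at which \<open>p/q\<close>, evaluated at \<open>c(s)\<close>, equals
  \<open>g(s) / per3_y_den(s)\<close>.\<close>

definition per3_coinc :: "'a::comm_ring_1 poly \<Rightarrow> nat \<Rightarrow> 'a poly \<Rightarrow> 'a poly \<Rightarrow> 'a poly" where
  "per3_coinc g m p q = g * per3_pullback m q - per3_y_den * per3_pullback m p"

lemma per3_coinc_rot:
  fixes p q :: "'a::field poly"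
  assumes "s \<noteq> 0"
  shows "poly (per3_coinc per3_y_num1 m p q) s =
      s ^ (6 * m + 3) * poly (per3_coinc per3_y_num0 m p q) (per3_rot s)"
    and "poly (per3_coinc per3_y_num2 m p q) s =
      s ^ (6 * m + 3) * poly (per3_coinc per3_y_num1 m p q) (per3_rot s)"
  using assms
  by (simp_all add: per3_coinc_def poly_per3_pullback_rot per3_rot_poly field_simps power_add)

lemma per3_coinc_omega_root_iff:
  fixes p q :: "'a::field poly"
  assumes "w\<^sup>2 + w + 1 = 0"
  shows "poly (per3_coinc per3_y_num1 m p q) w = 0 \<longleftrightarrow> poly (per3_coinc per3_y_num0 m p q) w = 0"
    and "poly (per3_coinc per3_y_num2 m p q) w = 0 \<longleftrightarrow> poly (per3_coinc per3_y_num0 m p q) w = 0"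
proof -
  have "w \<noteq> 0"
    using assms by auto
  then show "poly (per3_coinc per3_y_num1 m p q) w = 0 \<longleftrightarrow> poly (per3_coinc per3_y_num0 m p q) w = 0"
    and "poly (per3_coinc per3_y_num2 m p q) w = 0 \<longleftrightarrow> poly (per3_coinc per3_y_num0 m p q) w = 0"
    using per3_coinc_rot[of w m p q] per3_rot_omega[OF assms] by auto
qed

lemma per3_coinc_relation:
  fixes p q :: "'a::field_char_0 poly"
  shows "[:0, 1:] * per3_coinc per3_y_num0 m p q - [:1, 1:] * per3_coinc per3_y_num1 m p q
    + per3_coinc per3_y_num2 m p q = 0"
proof -
  have "poly ([:0, 1:] * per3_coinc per3_y_num0 m p q - [:1, 1:] * per3_coinc per3_y_num1 m p q
      + per3_coinc per3_y_num2 m p q) = poly 0"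
    by (rule ext) (simp add: per3_coinc_def poly_per3; algebra)
  then show ?thesis
    by (simp only: poly_eq_poly_eq_iff)
qed

text \<open>At the fixed points \<open>w\<close> of \<open>per3_rot\<close> the parametrisation of \<open>c\<close> is critical, so the
  pulled-back polynomials satisfy \<open>v P' = m v' P\<close> there, and a double root of the coincidence
  polynomial would force a common root of \<open>p\<close> and \<open>q\<close>.\<close>

lemma per3_coinc_simple_root_omega:
  fixes p q g :: "'a::field_char_0 poly"
  assumes w: "w\<^sup>2 + w + 1 = 0" and deg: "degree p \<le> m" "degree q \<le> m"
    and coprime: "\<And>x. \<not> (poly p x = 0 \<and> poly q x = 0)"
    and wronskian: "poly (wronskian g per3_y_den) w \<noteq> 0"
    and root: "poly (per3_coinc g m p q) w = 0"
  shows "poly (pderiv (per3_coinc g m p q)) w \<noteq> 0"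
proof
  assume root2: "poly (pderiv (per3_coinc g m p q)) w = 0"
  define P where "P = per3_pullback m p"
  define Q where "Q = per3_pullback m q"
  define v' where "v' = of_nat m * poly (pderiv per3_c_den) w"
  have v: "poly per3_c_den w = 4" and d: "poly per3_y_den w = -2"
    using per3_omega_values[OF w] by simp_all
  have P': "4 * poly (pderiv P) w = v' * poly P w" and Q': "4 * poly (pderiv Q) w = v' * poly Q w"
    using poly_pderiv_per3_pullback_omega[OF w, of m] v unfolding P_def Q_def v'_def by simp_all
  have E: "poly g w * poly Q w = poly per3_y_den w * poly P w"
    using root by (simp add: per3_coinc_def P_def Q_def)
  have "4 * poly (pderiv (per3_coinc g m p q)) w =
      4 * poly (pderiv g) w * poly Q w + poly g w * (4 * poly (pderiv Q) w)
      - 4 * poly (pderiv per3_y_den) w * poly P w - poly per3_y_den w * (4 * poly (pderiv P) w)"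
    unfolding per3_coinc_def P_def[symmetric] Q_def[symmetric]
    by (simp add: pderiv_diff pderiv_mult algebra_simps)
  also have "\<dots> = 4 * (poly (pderiv g) w * poly Q w - poly (pderiv per3_y_den) w * poly P w)
      + v' * (poly g w * poly Q w - poly per3_y_den w * poly P w)"
    unfolding P' Q' by (simp add: algebra_simps)
  finally have "4 * poly (pderiv (per3_coinc g m p q)) w =
      4 * (poly (pderiv g) w * poly Q w - poly (pderiv per3_y_den) w * poly P w)
      + v' * (poly g w * poly Q w - poly per3_y_den w * poly P w)" .
  then have E': "poly (pderiv g) w * poly Q w = poly (pderiv per3_y_den) w * poly P w"
    using root2 E by simp
  have "poly Q w * poly (wronskian g per3_y_den) w =
      poly per3_y_den w * (poly (pderiv g) w * poly Q w - poly (pderiv per3_y_den) w * poly P w)"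
    using E by (simp add: wronskian_def algebra_simps)
  then have "poly Q w = 0" "poly P w = 0"
    using E E' wronskian d by simp_all
  moreover have "poly Q w = 4 ^ m * poly q (poly per3_c_num w / 4)"
    "poly P w = 4 ^ m * poly p (poly per3_c_num w / 4)"
    using poly_hom_pullback_eq[of per3_c_den w] deg v unfolding P_def Q_def by simp_all
  ultimately show False
    using coprime by simp
qed

definition per3_degenerate :: "'a::comm_ring_1 poly \<Rightarrow> 'a \<Rightarrow> bool" where
  "per3_degenerate g s \<longleftrightarrow> s = 0 \<or> s = -1 \<or> s\<^sup>2 + s + 1 = 0 \<or> poly g s = 0"

lemma per3_coinc_nondegenerate_root:
  fixes p q :: "'a::field_char_0 poly"
  assumes deg: "degree p \<le> m" "degree q \<le> m"
    and coprime: "\<And>x. \<not> (poly p x = 0 \<and> poly q x = 0)"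
    and root: "poly (per3_coinc per3_y_num0 m p q) s = 0"
    and nondeg: "\<not> per3_degenerate per3_y_num0 s"
  shows "\<exists>c. poly q c \<noteq> 0 \<and> poly p c \<noteq> 0 \<and> exact_period (quad_map c) (poly p c / poly q c) 3"
proof -
  have s: "s \<noteq> 0" "s \<noteq> -1" "s\<^sup>2 + s + 1 \<noteq> 0" "poly per3_y_num0 s \<noteq> 0"
    using nondeg by (auto simp: per3_degenerate_def)
  define d where "d = poly per3_y_den s"
  define c where "c = poly per3_c_num s / poly per3_c_den s"
  have d: "d \<noteq> 0" and v: "poly per3_c_den s = d\<^sup>2"
    using s by (simp_all add: d_def poly_per3 add_eq_0_iff2)
  have "poly (per3_pullback m q) s = d\<^sup>2 ^ m * poly q c"
    "poly (per3_pullback m p) s = d\<^sup>2 ^ m * poly p c"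
    using poly_hom_pullback_eq[of per3_c_den s] deg d v unfolding c_def by simp_all
  then have eq: "poly per3_y_num0 s * poly q c = d * poly p c"
    using root d by (simp add: per3_coinc_def d_def)
  have "poly q c \<noteq> 0"
    using eq coprime[of c] d by auto
  moreover have "poly p c \<noteq> 0"
    using eq \<open>poly q c \<noteq> 0\<close> s(4) by auto
  moreover have "poly p c / poly q c = poly per3_y_num0 s / d"
    using eq \<open>poly q c \<noteq> 0\<close> d by (simp add: field_simps)
  ultimately show ?thesis
    using exact_period_per3_cycle[OF s(1-3)] unfolding c_def d_def by metis
qed

lemma per3_degenerate_rot:
  fixes g g' :: "'a::field poly"
  assumes "s \<noteq> 0" and "poly g (per3_rot s) = poly g' s / s ^ 3"
    and "per3_degenerate g (per3_rot s)"
  shows "per3_degenerate g' s"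
  using assms per3_rot_eq_0_iff[of s] per3_rot_neq_minus_1[of s] per3_rot_omega_iff[of s]
  by (auto simp: per3_degenerate_def)

lemma per3_coinc_roots_degenerate:
  fixes p q :: "'a::field poly"
  assumes "\<And>s. poly (per3_coinc per3_y_num0 m p q) s = 0 \<Longrightarrow> per3_degenerate per3_y_num0 s"
  shows "poly (per3_coinc per3_y_num1 m p q) s = 0 \<Longrightarrow> per3_degenerate per3_y_num1 s"
    and "poly (per3_coinc per3_y_num2 m p q) s = 0 \<Longrightarrow> per3_degenerate per3_y_num2 s"
proof -
  show deg1: "per3_degenerate per3_y_num1 s" if "poly (per3_coinc per3_y_num1 m p q) s = 0" for s
  proof (cases "s = 0")
    case False
    then show ?thesis
      using that assms[of "per3_rot s"] per3_coinc_rot(1)[OF False]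
      by (intro per3_degenerate_rot[OF False per3_rot_poly(4)[OF False]]) simp
  qed (simp add: per3_degenerate_def)
  show "per3_degenerate per3_y_num2 s" if "poly (per3_coinc per3_y_num2 m p q) s = 0"
  proof (cases "s = 0")
    case False
    then show ?thesis
      using that deg1[of "per3_rot s"] per3_coinc_rot(2)[OF False]
      by (intro per3_degenerate_rot[OF False per3_rot_poly(5)[OF False]]) simp
  qed (simp add: per3_degenerate_def)
qed

lemma per3_coinc_root_at_y_num0_root:
  fixes p q :: "'a::field_char_0 poly"
  assumes "degree p \<le> m" and "poly per3_y_num0 x = 0" and "poly (per3_coinc per3_y_num0 m p q) x = 0"
  shows "poly p x = 0"
proof -
  have "x \<noteq> 0" "x + 1 \<noteq> 0"
    using assms(2) by (auto simp: poly_per3 add_eq_0_iff2)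
  then have d: "poly per3_y_den x \<noteq> 0" and v: "poly per3_c_den x \<noteq> 0"
    by (simp_all add: poly_per3)
  have "poly (per3_pullback m p) x = 0"
    using assms(2,3) d by (simp add: per3_coinc_def)
  then show ?thesis
    using poly_hom_pullback_eq[OF v assms(1)] per3_y_num0_root[OF assms(2)] v by simp
qed

lemma card_per3_coinc_y_num_roots:
  fixes p q :: "'a::field_char_0 poly"
  assumes "p \<noteq> 0" and "degree p \<le> m"
  defines "Z g \<equiv> {x. poly g x = 0 \<and> poly (per3_coinc g m p q) x = 0}"
  shows "card (Z per3_y_num0) \<le> degree p" and "card (Z per3_y_num1) \<le> degree p"
    and "card (Z per3_y_num2) \<le> degree p"
proof -
  have Z0: "Z per3_y_num0 \<subseteq> {x. poly p x = 0}"
    using per3_coinc_root_at_y_num0_root[OF assms(2)] by (auto simp: Z_def)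
  have nonzero: "x \<noteq> 0" if "x \<in> Z per3_y_num1 \<union> Z per3_y_num2" for x
    using that by (auto simp: Z_def poly_per3)
  have "per3_rot x \<in> Z per3_y_num0" if "x \<in> Z per3_y_num1" for x
    using that nonzero[of x] per3_rot_poly(4)[of x] per3_coinc_rot(1)[of x m p q] by (simp add: Z_def)
  moreover have "per3_rot x \<in> Z per3_y_num1" if "x \<in> Z per3_y_num2" for x
    using that nonzero[of x] per3_rot_poly(5)[of x] per3_coinc_rot(2)[of x m p q] by (simp add: Z_def)
  ultimately have rot: "per3_rot ` Z per3_y_num1 \<subseteq> Z per3_y_num0"
    "per3_rot ` Z per3_y_num2 \<subseteq> Z per3_y_num1"
    by blast+
  have inj: "inj_on per3_rot (Z per3_y_num1)" "inj_on per3_rot (Z per3_y_num2)"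
    using nonzero by (auto intro: inj_on_subset[OF inj_on_per3_rot])
  have finite0: "finite (Z per3_y_num0)"
    using Z0 poly_roots_finite[OF assms(1)] finite_subset by blast
  then have finite1: "finite (Z per3_y_num1)"
    using rot(1) inj(1) finite_imageD finite_subset by blast
  have "card (Z per3_y_num0) \<le> degree p"
    using card_mono[OF poly_roots_finite[OF assms(1)] Z0] card_poly_roots_bound[OF assms(1)] by simp
  moreover have "card (Z per3_y_num1) \<le> card (Z per3_y_num0)"
    using card_inj_on_le[OF inj(1) rot(1) finite0] .
  moreover have "card (Z per3_y_num2) \<le> card (Z per3_y_num1)"
    using card_inj_on_le[OF inj(2) rot(2) finite1] .
  ultimately show "card (Z per3_y_num0) \<le> degree p" and "card (Z per3_y_num1) \<le> degree p"
    and "card (Z per3_y_num2) \<le> degree p"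
    by simp_all
qed

lemma degree_per3_coinc_y_num0:
  fixes p q :: "'a::field_char_0 poly"
  assumes "p \<noteq> 0" "q \<noteq> 0" "degree p \<le> m" "degree q = m"
  shows "degree (per3_coinc per3_y_num0 m p q) = 6 * m + 3"
proof -
  have "degree (per3_y_den * per3_pullback m p) \<le> 2 + (4 * m + 2 * degree p)"
    using degree_mult_le[of per3_y_den "per3_pullback m p"] degree_per3_pullback[OF assms(1,3)]
    by (simp add: per3_y_den_def)
  moreover have "poly (per3_pullback m q) 0 \<noteq> 0"
    using assms(2,4) by (auto simp: poly_per3_pullback_0_minus_1)
  then have "degree (per3_y_num0 * per3_pullback m q) = 6 * m + 3"
    using degree_per3_pullback[OF assms(2)] assms(4)
    by (subst degree_mult_eq) (auto simp: per3_y_num0_def)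
  ultimately show ?thesis
    unfolding per3_coinc_def using assms(3) by (subst degree_diff_eq_left) auto
qed

lemma per3_coinc_Suc:
  fixes p q :: "'a::field poly"
  assumes "degree q \<le> n"
  shows "per3_coinc g (Suc n) p q =
    per3_y_den * (g * per3_y_den * per3_pullback n q - per3_pullback (Suc n) p)"
proof -
  have "coeff q (Suc n) = 0"
    using assms by (simp add: coeff_eq_0)
  then have "per3_pullback (Suc n) q = per3_y_den * per3_y_den * per3_pullback n q"
    using hom_pullback_Suc by (simp add: per3_c_den_def power2_eq_square)
  then show ?thesis
    by (simp add: per3_coinc_def algebra_simps)
qed

text \<open>The coincidence polynomials share the factor \<open>per3_y_den\<close> exactly when
  \<open>degree q < degree p\<close>; once it is removed they no longer vanish at the cusps \<open>0\<close> and \<open>-1\<close>.\<close>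

lemma per3_coinc_common_factor:
  fixes p q :: "'a::field_char_0 poly"
  assumes p: "p \<noteq> 0" and q: "q \<noteq> 0" and m: "m = max (degree p) (degree q)"
  obtains D F0 F1 F2 where
    "per3_coinc per3_y_num0 m p q = D * F0" "per3_coinc per3_y_num1 m p q = D * F1"
    "per3_coinc per3_y_num2 m p q = D * F2"
    "D \<noteq> 0" "\<And>w. w\<^sup>2 + w + 1 = 0 \<Longrightarrow> poly D w \<noteq> 0"
    "\<And>F x. F \<in> {F0, F1, F2} \<Longrightarrow> x \<in> {0, -1} \<Longrightarrow> poly F x \<noteq> 0"
    "3 * m + 3 \<le> degree F0"
proof (cases "degree q = m")
  case True
  then have "coeff q m \<noteq> 0"
    using q by auto
  then have "poly (per3_coinc g m p q) x \<noteq> 0" if "g \<in> {per3_y_num0, per3_y_num1, per3_y_num2}"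
    "x \<in> {0, -1}" for g x
    using that by (auto simp: per3_coinc_def poly_per3_pullback_0_minus_1 poly_per3)
  then show ?thesis
    using degree_per3_coinc_y_num0[OF p q _ True] m by (intro that[of 1]) auto
next
  case False
  then have "degree q < m" "degree p = m"
    using m by auto
  then obtain n where n: "m = Suc n" "degree q \<le> n"
    by (cases m) auto
  define F where "F g = g * per3_y_den * per3_pullback n q - per3_pullback m p" for g
  have "coeff p m \<noteq> 0"
    using \<open>degree p = m\<close> p by auto
  then have "poly (F g) x \<noteq> 0" if "x \<in> {0, -1}" for g x
    using that by (auto simp: F_def poly_per3_y_den poly_per3_pullback_0_minus_1)
  moreover have "degree (per3_y_num0 * per3_y_den * per3_pullback n q) \<le> 3 + 2 + (4 * n + 2 * degree q)"
    using degree_mult_le[of "per3_y_num0 * per3_y_den" "per3_pullback n q"]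
      degree_mult_le[of per3_y_num0 per3_y_den] degree_per3_pullback[OF q n(2)]
    by (simp add: per3_y_num0_def per3_y_den_def)
  then have "degree (F per3_y_num0) = 6 * m"
    unfolding F_def using degree_per3_pullback[OF p, of m] \<open>degree p = m\<close> n
    by (subst degree_diff_eq_right) auto
  moreover have "poly per3_y_den w \<noteq> 0" if "w\<^sup>2 + w + 1 = 0" for w :: 'a
    using per3_omega_values(1)[OF that] by simp
  moreover have "per3_coinc g m p q = per3_y_den * F g" for g
    unfolding F_def n(1) by (rule per3_coinc_Suc[OF n(2)])
  moreover have "per3_y_den \<noteq> (0 :: 'a poly)"
    by (simp add: per3_y_den_def)
  ultimately show ?thesis
    using n(1) by (intro that[of per3_y_den "F per3_y_num0" "F per3_y_num1" "F per3_y_num2"]) auto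
qed

lemma omega_roots:
  shows "finite {w :: 'a::idom. w\<^sup>2 + w + 1 = 0}" and "card {w :: 'a. w\<^sup>2 + w + 1 = 0} \<le> 2"
proof -
  have eq: "{w :: 'a. w\<^sup>2 + w + 1 = 0} = {w. poly [:1, 1, 1:] w = 0}"
    by (auto simp: algebra_simps power2_eq_square)
  show "finite {w :: 'a. w\<^sup>2 + w + 1 = 0}"
    unfolding eq by (rule poly_roots_finite) simp
  show "card {w :: 'a. w\<^sup>2 + w + 1 = 0} \<le> 2"
    unfolding eq using card_poly_roots_bound[of "[:1, 1, 1:] :: 'a poly"] by simp
qed

text \<open>The roots of the coincidence polynomials at the fixed points of \<open>per3_rot\<close> are common to
  all three; they are collected in the factor \<open>G\<close>.\<close>

lemma per3_coinc_factorization: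
  fixes p q :: "'a::field_char_0 poly"
  assumes p: "p \<noteq> 0" and q: "q \<noteq> 0" and m: "m = max (degree p) (degree q)"
  obtains D G H0 H1 H2 where
    "per3_coinc per3_y_num0 m p q = D * (G * H0)" "per3_coinc per3_y_num1 m p q = D * (G * H1)"
    "per3_coinc per3_y_num2 m p q = D * (G * H2)"
    "D \<noteq> 0" "G \<noteq> 0" "degree G \<le> 2" "3 * m + 3 \<le> degree G + degree H0"
    "\<And>H x. H \<in> {H0, H1, H2} \<Longrightarrow> x \<in> {0, -1} \<Longrightarrow> poly (G * H) x \<noteq> 0"
    "\<And>w. w\<^sup>2 + w + 1 = 0 \<Longrightarrow> poly (per3_coinc per3_y_num0 m p q) w = 0 \<Longrightarrow> poly G w = 0"
proof -
  obtain D F0 F1 F2 where EF: "per3_coinc per3_y_num0 m p q = D * F0"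
      "per3_coinc per3_y_num1 m p q = D * F1" "per3_coinc per3_y_num2 m p q = D * F2"
    and D: "D \<noteq> 0" "\<And>w. w\<^sup>2 + w + 1 = 0 \<Longrightarrow> poly D w \<noteq> 0"
    and cusps: "\<And>F x. F \<in> {F0, F1, F2} \<Longrightarrow> x \<in> {0, -1} \<Longrightarrow> poly F x \<noteq> 0"
    and deg_F0: "3 * m + 3 \<le> degree F0"
    using per3_coinc_common_factor[OF p q m] by metis
  define \<Omega> where "\<Omega> = {w. w\<^sup>2 + w + 1 = 0 \<and> poly (per3_coinc per3_y_num0 m p q) w = 0}"
  have \<Omega>_omega: "\<Omega> \<subseteq> {w. w\<^sup>2 + w + 1 = 0}"
    by (auto simp: \<Omega>_def)
  then have "finite \<Omega>"
    using omega_roots(1) by (rule finite_subset)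
  have "card \<Omega> \<le> 2"
    using card_mono[OF omega_roots(1) \<Omega>_omega] omega_roots(2)[where 'a = 'a] by linarith
  define G where "G = (\<Prod>w\<in>\<Omega>. [:-w, 1:])"
  have "G \<noteq> 0" and "degree G \<le> 2"
    using \<open>finite \<Omega>\<close> \<open>card \<Omega> \<le> 2\<close> by (simp_all add: G_def degree_prod_sum_eq)
  have G_roots: "poly G w = 0" if "w \<in> \<Omega>" for w
    using that \<open>finite \<Omega>\<close> by (simp add: G_def poly_prod prod_zero_iff)
  have "G dvd F" if "F \<in> {F0, F1, F2}" for F
    unfolding G_def
  proof (rule prod_linear_factors_dvd[OF \<open>finite \<Omega>\<close>])
    fix w assume "w \<in> \<Omega>"
    then show "poly F w = 0"
      using that per3_coinc_omega_root_iff[of w m p q] EF D(2)[of w] unfolding \<Omega>_def by auto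
  qed
  then obtain H0 H1 H2 where FH: "F0 = G * H0" "F1 = G * H1" "F2 = G * H2"
    by (metis dvdE insertCI)
  have "H0 \<noteq> 0"
    using cusps[of F0 0] FH(1) by auto
  then have "3 * m + 3 \<le> degree G + degree H0"
    using deg_F0 FH(1) \<open>G \<noteq> 0\<close> by (simp add: degree_mult_eq)
  then show ?thesis
    using that[of D G H0 H1 H2] EF FH D(1) cusps G_roots \<open>G \<noteq> 0\<close> \<open>degree G \<le> 2\<close>
    unfolding \<Omega>_def by blast
qed

text \<open>If every root of the coincidence polynomial is degenerate, then after removing the common
  factors its roots lie on those of \<open>g\<close>: the cusps were removed, and at the fixed points of
  \<open>per3_rot\<close> the factor \<open>G\<close> absorbs the (simple) root.\<close>

lemma per3_coinc_cofactor_root: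
  fixes p q g D G H :: "'a::field_char_0 poly"
  assumes deg: "degree p \<le> m" "degree q \<le> m" and coprime: "\<And>x. \<not> (poly p x = 0 \<and> poly q x = 0)"
    and E: "per3_coinc g m p q = D * (G * H)"
    and cusps: "\<And>x. x \<in> {0, -1} \<Longrightarrow> poly (G * H) x \<noteq> 0"
    and degenerate: "\<And>s. poly (per3_coinc g m p q) s = 0 \<Longrightarrow> per3_degenerate g s"
    and G_omega: "\<And>w. w\<^sup>2 + w + 1 = 0 \<Longrightarrow> poly (per3_coinc g m p q) w = 0 \<Longrightarrow> poly G w = 0"
    and wronskian: "\<And>w. w\<^sup>2 + w + 1 = 0 \<Longrightarrow> poly (wronskian g per3_y_den) w \<noteq> 0"
    and root: "poly H x = 0"
  shows "poly g x = 0"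
proof -
  have E_root: "poly (per3_coinc g m p q) x = 0"
    using root by (simp add: E)
  have "x\<^sup>2 + x + 1 \<noteq> 0"
  proof
    assume omega: "x\<^sup>2 + x + 1 = 0"
    then have "poly (pderiv (per3_coinc g m p q)) x \<noteq> 0"
      using E_root by (intro per3_coinc_simple_root_omega[OF omega deg coprime wronskian])
    moreover have "poly G x = 0"
      using G_omega[OF omega E_root] .
    ultimately show False
      using root by (simp add: E pderiv_mult)
  qed
  moreover have "x \<noteq> 0" "x \<noteq> -1"
    using cusps[of x] root by auto
  ultimately show ?thesis
    using degenerate[OF E_root] by (simp add: per3_degenerate_def)
qed

text \<open>Mason--Stothers applied to \<open>s H\<^sub>0 - (s + 1) H\<^sub>1 + H\<^sub>2 = 0\<close>.\<close>

lemma per3_cofactor_degree_bound: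
  fixes H0 H1 H2 :: "'a::{alg_closed_field,field_char_0} poly"
  assumes sum: "[:0, 1:] * H0 - [:1, 1:] * H1 + H2 = 0"
    and roots: "\<And>x. poly H0 x = 0 \<Longrightarrow> x \<in> Z0" "\<And>x. poly H1 x = 0 \<Longrightarrow> x \<in> Z1"
      "\<And>x. poly H2 x = 0 \<Longrightarrow> x \<in> Z2"
    and Z: "Z0 \<subseteq> {x. poly per3_y_num0 x = 0}" "Z1 \<subseteq> {x. poly per3_y_num1 x = 0}" "finite Z2"
  shows "degree H0 < 1 + card Z0 + card Z1 + card Z2"
proof (cases "H0 = 0")
  case False
  define A where "A = [:0, 1:] * H0"
  define B where "B = - ([:1, 1:] * H1)"
  have "A + B + H2 = 0"
    using sum by (simp only: A_def B_def diff_conv_add_uminus)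
  have roots_B: "x = -1 \<or> x \<in> Z1" if "poly B x = 0" for x
  proof -
    have "poly B x = - ((x + 1) * poly H1 x)"
      by (simp add: B_def algebra_simps)
    then show ?thesis
      using that roots(2)[of x] by (auto simp: add_eq_0_iff2)
  qed
  have "finite Z0" "finite Z1"
    using finite_subset[OF Z(1) poly_roots_finite] finite_subset[OF Z(2) poly_roots_finite]
    by (simp_all add: per3_y_num0_def per3_y_num1_def)
  have coprime: "\<not> (poly A x = 0 \<and> poly B x = 0)" for x
  proof
    assume "poly A x = 0 \<and> poly B x = 0"
    then have "x = 0 \<or> poly per3_y_num0 x = 0" "x = -1 \<or> poly per3_y_num1 x = 0"
      using roots(1)[of x] roots_B[of x] Z by (auto simp: A_def)
    then show False
      using per3_y_num0_y_num1_coprime[of x] by (auto simp: poly_per3)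
  qed
  have "degree A < card {x. poly (A * B * H2) x = 0}"
    using False by (intro mason_stothers[OF \<open>A + B + H2 = 0\<close> coprime]) (simp add: A_def degree_mult_eq)
  also have "\<dots> \<le> card ({0, -1} \<union> Z0 \<union> Z1 \<union> Z2)"
    using roots roots_B \<open>finite Z0\<close> \<open>finite Z1\<close> Z(3) by (intro card_mono) (auto simp: A_def)
  also have "\<dots> \<le> card {0, -1 :: 'a} + card Z0 + card Z1 + card Z2"
    by (meson card_Un_le le_trans add_le_mono order_refl)
  finally show ?thesis
    using False by (simp add: A_def degree_mult_eq card_insert_if)
qed simp

lemma per3_coinc_nondegenerate_root_exists:
  fixes p q :: "'a::{alg_closed_field,field_char_0} poly"
  assumes p: "p \<noteq> 0" and q: "q \<noteq> 0" and m: "m = max (degree p) (degree q)"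
    and coprime: "\<And>x. \<not> (poly p x = 0 \<and> poly q x = 0)"
  shows "\<exists>s. poly (per3_coinc per3_y_num0 m p q) s = 0 \<and> \<not> per3_degenerate per3_y_num0 s"
proof (rule ccontr)
  assume "\<not> ?thesis"
  then have degenerate0: "\<And>s. poly (per3_coinc per3_y_num0 m p q) s = 0 \<Longrightarrow> per3_degenerate per3_y_num0 s"
    by blast
  have degenerate1: "\<And>s. poly (per3_coinc per3_y_num1 m p q) s = 0 \<Longrightarrow> per3_degenerate per3_y_num1 s"
    and degenerate2: "\<And>s. poly (per3_coinc per3_y_num2 m p q) s = 0 \<Longrightarrow> per3_degenerate per3_y_num2 s"
    using per3_coinc_roots_degenerate[OF degenerate0] by blast+
  have deg: "degree p \<le> m" "degree q \<le> m"
    using m by auto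
  obtain D G H0 H1 H2 where E: "per3_coinc per3_y_num0 m p q = D * (G * H0)"
      "per3_coinc per3_y_num1 m p q = D * (G * H1)" "per3_coinc per3_y_num2 m p q = D * (G * H2)"
    and DG: "D \<noteq> 0" "G \<noteq> 0" and deg_G: "degree G \<le> 2"
    and deg_H0: "3 * m + 3 \<le> degree G + degree H0"
    and cusps: "\<And>H x. H \<in> {H0, H1, H2} \<Longrightarrow> x \<in> {0, -1} \<Longrightarrow> poly (G * H) x \<noteq> 0"
    and G_omega: "\<And>w. w\<^sup>2 + w + 1 = 0 \<Longrightarrow> poly (per3_coinc per3_y_num0 m p q) w = 0 \<Longrightarrow> poly G w = 0"
    using per3_coinc_factorization[OF p q m] by blast
  define Z where "Z g = {x. poly g x = 0 \<and> poly (per3_coinc g m p q) x = 0}" for g :: "'a poly"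
  have cusps_H: "\<And>x. x \<in> {0, -1} \<Longrightarrow> poly (G * H0) x \<noteq> 0"
    "\<And>x. x \<in> {0, -1} \<Longrightarrow> poly (G * H1) x \<noteq> 0" "\<And>x. x \<in> {0, -1} \<Longrightarrow> poly (G * H2) x \<noteq> 0"
    by (rule cusps; simp)+
  have G_omega_12: "\<And>w. w\<^sup>2 + w + 1 = 0 \<Longrightarrow> poly (per3_coinc per3_y_num1 m p q) w = 0 \<Longrightarrow> poly G w = 0"
    "\<And>w. w\<^sup>2 + w + 1 = 0 \<Longrightarrow> poly (per3_coinc per3_y_num2 m p q) w = 0 \<Longrightarrow> poly G w = 0"
    using G_omega per3_coinc_omega_root_iff[of _ m p q] by blast+
  note cofactor_root = per3_coinc_cofactor_root[OF deg coprime]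
  have "x \<in> Z per3_y_num0" if "poly H0 x = 0" for x
    using cofactor_root[OF E(1) cusps_H(1) degenerate0 G_omega per3_y_wronskian_omega(1) that] that
    by (simp add: Z_def E)
  moreover have "x \<in> Z per3_y_num1" if "poly H1 x = 0" for x
    using cofactor_root[OF E(2) cusps_H(2) degenerate1 G_omega_12(1) per3_y_wronskian_omega(2) that] that
    by (simp add: Z_def E)
  moreover have "x \<in> Z per3_y_num2" if "poly H2 x = 0" for x
    using cofactor_root[OF E(3) cusps_H(3) degenerate2 G_omega_12(2) per3_y_wronskian_omega(3) that] that
    by (simp add: Z_def E)
  moreover have "D * G * ([:0, 1:] * H0 - [:1, 1:] * H1 + H2) = 0"
    using per3_coinc_relation[of m p q] unfolding E by (simp add: algebra_simps)
  moreover have "finite (Z per3_y_num2)"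
    using poly_roots_finite[of per3_y_num2] by (auto simp: Z_def per3_y_num2_def intro: finite_subset)
  ultimately have "degree H0 < 1 + card (Z per3_y_num0) + card (Z per3_y_num1) + card (Z per3_y_num2)"
    using DG by (intro per3_cofactor_degree_bound) (auto simp: Z_def)
  then show False
    using card_per3_coinc_y_num_roots[OF p, of m q] deg deg_G deg_H0 unfolding Z_def by linarith
qed

lemma exists_nonzero_period3_value:
  fixes p q :: "'a::{alg_closed_field,field_char_0} poly"
  assumes "p \<noteq> 0" and "q \<noteq> 0" and coprime: "\<And>x. \<not> (poly p x = 0 \<and> poly q x = 0)"
  shows "\<exists>c. poly q c \<noteq> 0 \<and> poly p c \<noteq> 0 \<and> exact_period (quad_map c) (poly p c / poly q c) 3"
proof -
  define m where "m = max (degree p) (degree q)"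
  obtain s where "poly (per3_coinc per3_y_num0 m p q) s = 0" "\<not> per3_degenerate per3_y_num0 s"
    using per3_coinc_nondegenerate_root_exists[OF assms(1,2) m_def coprime] by blast
  then show ?thesis
    using m_def by (intro per3_coinc_nondegenerate_root[OF _ _ coprime]) auto
qed

section \<open>Realising the portraits \<open>(M, 3)\<close>\<close>

lemma not_realizes_f2_0_1: "\<not> realizes_f2 (0 :: 'a::field poly fract) 1 N"
  unfolding realizes_f2_def place_eval_0 using not_has_portrait_f2_0_1 by blast

lemma realizes_f2_0_3:
  fixes \<alpha> :: "'a::{alg_closed_field,field_char_0} poly fract"
  shows "realizes_f2 \<alpha> 0 3"
proof -
  obtain p q where pq: "\<alpha> = Fract p q" "q \<noteq> 0" and coprime: "\<And>x. \<not> (poly p x = 0 \<and> poly q x = 0)"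
    using fract_coprime_repr[of \<alpha>] by blast
  obtain c y where "place_eval \<alpha> c = Some y" "exact_period (quad_map c) y 3"
  proof (cases "p = 0")
    case True
    then have "\<alpha> = 0"
      using pq by (simp add: Zero_fract_def eq_fract)
    obtain c where "poly per3_y_num0 c = (0 :: 'a)"
      using alg_closed_imp_poly_has_root[of per3_y_num0] by (auto simp: per3_y_num0_def)
    then show ?thesis
      using \<open>\<alpha> = 0\<close> place_eval_0 exact_period_3_zero that by blast
  next
    case False
    then show ?thesis
      using exists_nonzero_period3_value[OF False pq(2) coprime] place_eval_Fract[OF pq(2)] pq(1) that
      by blast
  qed
  then show ?thesis
    unfolding realizes_f2_def by (metis has_portrait_0I exact_period_f2_Some)
qed

lemma realizes_f2_Suc_3:
  fixes \<alpha> :: "'a::{alg_closed_field,field_char_0} poly fract"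
  assumes "(\<alpha>, M) \<noteq> (0, 0)"
  shows "realizes_f2 \<alpha> (Suc M) 3"
proof -
  obtain p q where pq: "\<alpha> = Fract p q" "q \<noteq> 0" and coprime: "\<And>x. \<not> (poly p x = 0 \<and> poly q x = 0)"
    using fract_coprime_repr[of \<alpha>] by blast
  define P where "P = quad_iter_num p q M"
  have "p \<noteq> 0 \<or> M > 0"
    using assms pq by (auto simp: Zero_fract_def eq_fract)
  then have "- P \<noteq> 0"
    using quad_iter_num_nonzero[OF pq(2)] by (simp add: P_def)
  moreover have "q ^ 2 ^ M \<noteq> 0"
    using pq(2) by simp
  moreover have "\<not> (poly (- P) x = 0 \<and> poly (q ^ 2 ^ M) x = 0)" for x
    using quad_iter_num_coprime[OF coprime] by (simp add: P_def)
  ultimately obtain c where c: "poly (q ^ 2 ^ M) c \<noteq> 0" "poly (- P) c \<noteq> 0"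
    "exact_period (quad_map c) (poly (- P) c / poly (q ^ 2 ^ M) c) 3"
    using exists_nonzero_period3_value[of "- P" "q ^ 2 ^ M"] by blast
  define v where "v = poly p c / poly q c"
  have "poly q c \<noteq> 0"
    using c(1) by simp
  then have "place_eval \<alpha> c = Some v" and y: "(quad_map c ^^ M) v = poly P c / poly (q ^ 2 ^ M) c"
    using pq place_eval_Fract poly_quad_iter_num[of q c p M] by (simp_all add: v_def P_def)
  moreover have "has_portrait (f2 c) (Some v) (Suc M) 3"
    by (rule has_portrait_SucI[where w = "Some (- (quad_map c ^^ M) v)"])
      (use c y in \<open>simp_all add: f2_Some f2_funpow_Some exact_period_f2_Some quad_map_def\<close>)
  ultimately show ?thesis
    unfolding realizes_f2_def by metis
qed

theorem proposition5p11:
  fixes \<alpha> :: "'k::{alg_closed_field, field_char_0} poly fract" and M :: nat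
  shows "realizes_f2 \<alpha> M 3 \<longleftrightarrow> (\<alpha>, M) \<noteq> (0, 1)"
proof
  assume "realizes_f2 \<alpha> M 3"
  then show "(\<alpha>, M) \<noteq> (0, 1)"
    using not_realizes_f2_0_1 by auto
next
  assume "(\<alpha>, M) \<noteq> (0, 1)"
  then show "realizes_f2 \<alpha> M 3"
    by (cases M) (simp_all add: realizes_f2_0_3 realizes_f2_Suc_3)
qed

end
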